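(* Let $d\ge2$. There is a constant $C_d>0$ depending only on $d$ such that for every $N\in\mathbb{N}$ and every $X\in\mathcal X_N$, $$N\le|\zeta(X)|\le N+C_dN^{\frac{d-1}{d}}P_N(X).$$ In particular $|\zeta(X)|\le C_dN$ (with a possibly larger dimensional constant).
   Context: $\mathcal X_N$ is the family of subsets of $\mathbb{Z}^d$ with exactly $N$ elements. For $X\subset\mathbb{Z}^d$ and $p\in X$, $\mathrm{val}(p)=\#\{q\in\mathbb{Z}^d\setminus X:|p-q|=1\}$, $P(X)=\sum_{p\in X}\mathrm{val}(p)$, and for $X\in\mathcal X_N$, $P_N(X)=N^{-(d-1)/d}P(X)$. Kuhn decomposition: for a permutation $\pi$ of $\{1,\dots,d\}$, $T_\pi=\{x\in\mathbb{R}^d:0\le x_{\pi(d)}\le\dots\le x_{\pi(1)}\le1\}$; $\mathcal{T}=\{z+T_\pi:z\in\mathbb{Z}^d,\pi\}$; for $i\in\mathbb{Z}^d$, $\mathcal T(i)=\{T\in\mathcal T:i\in T\}$. For $X\subset\mathbb{Z}^d$, $\zeta(X)=\bigcup_{i\in X}\bigcup_{T\in\mathcal T(i)}T\subset\mathbb{R}^d$. $|\cdot|$ is Lebesgue measure. *)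

theory Defs
  imports "HOL-Analysis.Analysis"
begin

text \<open>Lattice points of Z^d are vectors of type int^'n; d = CARD('n).
  Embedding into R^d.\<close>
definition lat :: "int^'n \<Rightarrow> real^'n" where
  "lat p = (\<chi> j. real_of_int (p $ j))"

definition val :: "(int^'n) set \<Rightarrow> int^'n \<Rightarrow> nat" where
  "val X p = card {q. q \<notin> X \<and> norm (lat p - lat q) = 1}"

definition perim :: "(int^'n) set \<Rightarrow> real" where
  "perim X = (\<Sum>p\<in>X. real (val X p))"

definition perimN :: "(int^'n::finite) set \<Rightarrow> real" where
  "perimN X = real (card X) powr (- (real CARD('n) - 1) / real CARD('n)) * perim X"

text \<open>A permutation pi of {1..d} composed with a fixed
  enumeration of the index type is a bijection s : {0..<d} -> 'n, with
  s k = the coordinate pi(k+1).\<close>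
definition kuhn_simplex :: "(nat \<Rightarrow> 'n::finite) \<Rightarrow> (real^'n) set" where
  "kuhn_simplex s = {x. 0 \<le> x $ s (CARD('n) - 1) \<and> x $ s 0 \<le> 1 \<and>
      (\<forall>k. Suc k < CARD('n) \<longrightarrow> x $ s (Suc k) \<le> x $ s k)}"

definition kuhn_family :: "(real^'n::finite) set set" where
  "kuhn_family = {(\<lambda>x. lat z + x) ` kuhn_simplex s | z s.
      bij_betw s {..<CARD('n)} (UNIV :: 'n set)}"

definition kuhn_at :: "int^'n::finite \<Rightarrow> (real^'n) set set" where
  "kuhn_at i = {T \<in> kuhn_family. lat i \<in> T}"

definition zeta :: "(int^'n::finite) set \<Rightarrow> (real^'n) set" where
  "zeta X = (\<Union>i\<in>X. \<Union>T\<in>kuhn_at i. T)"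

end

(*
  For i in X the Kuhn simplices containing i cover the unit cube [i, i + 1]: sorting the
  coordinates of a point of [0, 1]^d in decreasing order puts it into a Kuhn simplex, and every
  Kuhn simplex contains its origin. Distinct unit cubes meet in a null set, so |zeta X| >= N.

  Conversely, a Kuhn simplex containing i lies in a unit cube [z, z + 1] having i as a vertex,
  so zeta X is covered by the cubes touching X. If such a cube has its base point z outside X,
  walk from its vertex in X down to z one coordinate at a time: the first point outside X lies on
  the outer vertex boundary of X, and the cube touches it. The outer boundary has at most P(X)
  points and each point touches 2^d cubes, whence |zeta X| <= N + 2^d P(X).
*)

theory Submission
  imports Defs "HOL-Library.FuncSet"
begin

section \<open>Lattice vectors\<close>

lemma bij_betw_vec_lambda_PiE:
  "bij_betw vec_lambda (PiE UNIV A) {q::'a^'n::finite. \<forall>j. q $ j \<in> A j}"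
proof (rule bij_betwI')
  show "x \<in> PiE UNIV A \<Longrightarrow> y \<in> PiE UNIV A \<Longrightarrow> (vec_lambda x = vec_lambda y) = (x = y)" for x y
    by (simp add: vec_lambda_inject)
  show "x \<in> PiE UNIV A \<Longrightarrow> vec_lambda x \<in> {q. \<forall>j. q $ j \<in> A j}" for x
    by (auto simp: PiE_iff)
  show "\<exists>x\<in>PiE UNIV A. q = vec_lambda x" if "q \<in> {q. \<forall>j. q $ j \<in> A j}" for q
    using that by (intro bexI[of _ "vec_nth q"]) (auto simp: PiE_iff)
qed

lemma finite_vec_box:
  assumes "\<And>j. finite (A j)"
  shows "finite {q::'a^'n::finite. \<forall>j. q $ j \<in> A j}"
proof -
  have "finite (PiE (UNIV :: 'n set) A)"
    using assms by (simp add: finite_PiE)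
  then show ?thesis
    using bij_betw_finite[OF bij_betw_vec_lambda_PiE] by blast
qed

lemma lat_nth [simp]: "lat p $ j = real_of_int (p $ j)"
  by (simp add: lat_def)

lemma lat_diff: "lat (p - q) = lat p - lat q"
  by (simp add: vec_eq_iff)

lemma finite_lattice_sphere:
  fixes p :: "int^'n::finite"
  shows "finite {q. norm (lat p - lat q) = 1}"
proof (rule finite_subset)
  show "{q. norm (lat p - lat q) = 1} \<subseteq> {q. \<forall>j. q $ j \<in> {p$j - 1 .. p$j + 1}}"
  proof safe
    fix q j assume "norm (lat p - lat q) = 1"
    then have "\<bar>real_of_int (p$j - q$j)\<bar> \<le> 1"
      using component_le_norm_cart[of "lat p - lat q" j] by simp
    then have "\<bar>p$j - q$j\<bar> \<le> 1"
      by (metis of_int_abs of_int_le_1_iff)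
    then show "q $ j \<in> {p$j - 1 .. p$j + 1}" by auto
  qed
  show "finite {q::int^'n. \<forall>j. q $ j \<in> {p$j - 1 .. p$j + 1}}"
    by (rule finite_vec_box) simp
qed

section \<open>Unit cubes touching a lattice set\<close>

definition unit_corners :: "(int^'n::finite) set" where
  "unit_corners = {w. \<forall>j. w $ j \<in> {0, 1}}"

definition touching_cubes :: "(int^'n::finite) set \<Rightarrow> (int^'n) set" where
  "touching_cubes X = {z. \<exists>w\<in>unit_corners. z + w \<in> X}"

definition outer_boundary :: "(int^'n::finite) set \<Rightarrow> (int^'n) set" where
  "outer_boundary X = {q. q \<notin> X \<and> (\<exists>p\<in>X. norm (lat p - lat q) = 1)}"

lemma finite_unit_corners: "finite unit_corners"
  unfolding unit_corners_def by (rule finite_vec_box) simp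

lemma card_unit_corners: "card (unit_corners :: (int^'n::finite) set) = 2 ^ CARD('n)"
proof -
  have "card (unit_corners :: (int^'n) set) = card (PiE (UNIV :: 'n set) (\<lambda>_. {0, 1 :: int}))"
    unfolding unit_corners_def by (rule bij_betw_same_card[OF bij_betw_vec_lambda_PiE, symmetric])
  also have "\<dots> = 2 ^ CARD('n)"
    by (simp add: card_PiE numeral_2_eq_2)
  finally show ?thesis .
qed

lemma lat_in_unit_box_iff: "lat w \<in> cbox 0 1 \<longleftrightarrow> w \<in> unit_corners"
proof -
  have "0 \<le> real_of_int k \<and> real_of_int k \<le> 1 \<longleftrightarrow> k \<in> {0, 1}" for k :: int
    by auto
  then show ?thesis
    by (simp add: mem_box_cart unit_corners_def)
qed

lemma touching_cubes_eq_image: "touching_cubes X = (\<lambda>(i, w). i - w) ` (X \<times> unit_corners)"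
  by (force simp: touching_cubes_def)

lemma finite_touching_cubes: "finite X \<Longrightarrow> finite (touching_cubes X)"
  by (simp add: touching_cubes_eq_image finite_unit_corners)

lemma card_touching_cubes_le:
  "finite X \<Longrightarrow> card (touching_cubes (X :: (int^'n::finite) set)) \<le> 2 ^ CARD('n) * card X"
  unfolding touching_cubes_eq_image
  by (metis card_cartesian_product card_image_le card_unit_corners finite_SigmaI
      finite_unit_corners mult.commute)

lemma finite_outer_boundary: "finite X \<Longrightarrow> finite (outer_boundary X)"
  by (rule finite_subset[of _ "\<Union>p\<in>X. {q. norm (lat p - lat q) = 1}"])
     (auto simp: outer_boundary_def finite_lattice_sphere)

lemma card_outer_boundary_le_perim:
  assumes "finite X"
  shows "real (card (outer_boundary X)) \<le> perim X"
proof -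
  have "outer_boundary X = (\<Union>p\<in>X. {q. q \<notin> X \<and> norm (lat p - lat q) = 1})"
    by (auto simp: outer_boundary_def)
  then have "card (outer_boundary X) \<le> (\<Sum>p\<in>X. val X p)"
    using card_UN_le[OF assms] by (simp add: val_def)
  then show ?thesis
    unfolding perim_def by (metis of_nat_le_iff of_nat_sum)
qed

lemma diff_indicator_in_touching_outer_boundary:
  assumes "finite J" "a \<in> X"
  shows "a - (\<chi> j. if j \<in> J then 1 else 0) \<in> X \<union> touching_cubes (outer_boundary X)"
  using assms
proof (induction J arbitrary: a rule: finite_induct)
  case empty
  have "(\<chi> j. 0) = (0 :: int^'a)"
    by (simp add: vec_eq_iff)
  with empty show ?case by simp
next
  case (insert j J)
  define e :: "int^'a" where "e = axis j 1"
  define v :: "int^'a" where "v = (\<chi> k. if k \<in> J then 1 else 0)"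
  have split: "a - (\<chi> k. if k \<in> insert j J then 1 else 0) = (a - e) - v"
    using insert.hyps(2) by (auto simp: vec_eq_iff e_def v_def axis_def)
  show ?case
  proof (cases "a - e \<in> X")
    case True
    then show ?thesis
      using insert.IH unfolding split v_def by blast
  next
    case False
    have "lat a - lat (a - e) = axis j 1"
      by (simp add: vec_eq_iff e_def axis_def)
    then have "a - e \<in> outer_boundary X"
      using False insert.prems by (auto simp: outer_boundary_def intro!: bexI[of _ a])
    moreover have "v \<in> unit_corners"
      by (simp add: v_def unit_corners_def)
    ultimately show ?thesis
      unfolding split touching_cubes_def by force
  qed
qed

lemma touching_cubes_subset_outer_boundary:
  "touching_cubes X \<subseteq> X \<union> touching_cubes (outer_boundary X)"
proof
  fix z assume "z \<in> touching_cubes X"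
  then obtain w where w: "w \<in> unit_corners" "z + w \<in> X"
    by (auto simp: touching_cubes_def)
  then have "w = (\<chi> j. if j \<in> {j. w $ j = 1} then 1 else 0)"
    by (auto simp: unit_corners_def vec_eq_iff)
  then show "z \<in> X \<union> touching_cubes (outer_boundary X)"
    using diff_indicator_in_touching_outer_boundary[of "{j. w $ j = 1}" "z + w" X] w(2)
    by (metis add_diff_cancel finite)
qed

lemma card_touching_cubes_le_perim:
  fixes X :: "(int^'n::finite) set"
  assumes "finite X"
  shows "real (card (touching_cubes X)) \<le> card X + 2 ^ CARD('n) * perim X"
proof -
  have "card (touching_cubes X) \<le> card (X \<union> touching_cubes (outer_boundary X))"
    using assms touching_cubes_subset_outer_boundary
    by (intro card_mono) (simp_all add: finite_touching_cubes finite_outer_boundary)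
  also have "\<dots> \<le> card X + card (touching_cubes (outer_boundary X))"
    by (rule card_Un_le)
  also have "\<dots> \<le> card X + 2 ^ CARD('n) * card (outer_boundary X)"
    using assms by (simp add: card_touching_cubes_le finite_outer_boundary)
  finally have "real (card (touching_cubes X)) \<le> real (card X + 2 ^ CARD('n) * card (outer_boundary X))"
    by (simp only: of_nat_le_iff)
  also have "\<dots> = card X + 2 ^ CARD('n) * real (card (outer_boundary X))"
    by simp
  also have "\<dots> \<le> card X + 2 ^ CARD('n) * perim X"
    using card_outer_boundary_le_perim[OF assms] by simp
  finally show ?thesis .
qed

section \<open>Unit cubes and Kuhn simplices\<close>

definition unit_cube :: "int^'n::finite \<Rightarrow> (real^'n) set" where
  "unit_cube z = cbox (lat z) (lat z + 1)"

lemma unit_cube_eq_translation: "unit_cube z = (\<lambda>x. lat z + x) ` cbox 0 1"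
  unfolding unit_cube_def using cbox_translation[of "lat z" 0 1] by simp

lemma compact_unit_cube: "compact (unit_cube z)"
  by (simp add: unit_cube_def)

lemma lmeasurable_unit_cube: "unit_cube z \<in> lmeasurable"
  by (simp add: unit_cube_def)

lemma measure_unit_cube: "measure lebesgue (unit_cube z) = 1"
proof -
  have "cbox (lat z) (lat z + 1) \<noteq> {}"
    by (simp add: interval_ne_empty_cart)
  then show ?thesis
    unfolding unit_cube_def by (simp add: content_cbox_cart)
qed

lemma negligible_unit_cube_Int:
  fixes a :: "int^'n::finite"
  assumes "a \<noteq> b"
  shows "negligible (unit_cube a \<inter> unit_cube b)"
proof -
  obtain j where "a $ j \<noteq> b $ j"
    using assms by (auto simp: vec_eq_iff)
  then have "a $ j + 1 \<le> b $ j \<or> b $ j + 1 \<le> a $ j"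
    by linarith
  then have "real_of_int (a $ j + 1) \<le> real_of_int (b $ j) \<or>
      real_of_int (b $ j + 1) \<le> real_of_int (a $ j)"
    by (simp only: of_int_le_iff)
  then have "unit_cube a \<inter> unit_cube b \<subseteq>
      {x. x $ j = real_of_int (a $ j) + 1} \<union> {x. x $ j = real_of_int (b $ j) + 1}"
    by (auto simp: unit_cube_def mem_box_cart dest!: spec[of _ j])
  moreover have "negligible {x :: real^'n. x $ j = c}" for c
    by (simp add: cart_eq_inner_axis negligible_standard_hyperplane)
  ultimately show ?thesis
    by (meson negligible_Un negligible_subset)
qed

lemma kuhn_simplex_antimono:
  fixes s :: "nat \<Rightarrow> 'n::finite"
  assumes "x \<in> kuhn_simplex s" "k \<le> l" "l < CARD('n)"
  shows "x $ s l \<le> x $ s k"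
proof (rule lift_Suc_antimono_le_ivl[where f = "\<lambda>n. x $ s n"])
  show "x $ s (Suc n) \<le> x $ s n" if "n \<in> {n. Suc n < CARD('n)}" for n
    using assms(1) that by (simp add: kuhn_simplex_def)
  show "{k..<l} \<subseteq> {n. Suc n < CARD('n)}"
    using assms(3) by auto
qed (rule assms(2))

lemma kuhn_simplex_subset_unit_box:
  assumes "bij_betw s {..<CARD('n)} (UNIV :: 'n::finite set)"
  shows "kuhn_simplex s \<subseteq> cbox 0 1"
proof
  fix x assume x: "x \<in> kuhn_simplex s"
  have "0 \<le> x $ j \<and> x $ j \<le> 1" for j
  proof -
    obtain k where k: "k < CARD('n)" "j = s k"
      using assms by (metis bij_betw_imp_surj_on lessThan_iff UNIV_I imageE)
    have "0 \<le> x $ s (CARD('n) - 1)" "x $ s 0 \<le> 1"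
      using x by (auto simp: kuhn_simplex_def)
    moreover have "x $ s (CARD('n) - 1) \<le> x $ s k" "x $ s k \<le> x $ s 0"
      using kuhn_simplex_antimono[OF x] k by auto
    ultimately show ?thesis
      using k by simp
  qed
  then show "x \<in> cbox 0 1"
    by (simp add: mem_box_cart)
qed

lemma zero_in_kuhn_simplex: "0 \<in> kuhn_simplex s"
  by (simp add: kuhn_simplex_def)

lemma compact_kuhn_simplex:
  assumes "bij_betw s {..<CARD('n)} (UNIV :: 'n::finite set)"
  shows "compact (kuhn_simplex s)"
  unfolding compact_eq_bounded_closed
proof
  show "bounded (kuhn_simplex s)"
    using kuhn_simplex_subset_unit_box[OF assms] bounded_cbox bounded_subset by blast
  show "closed (kuhn_simplex s)"
    unfolding kuhn_simplex_def
    by (intro closed_Collect_conj closed_Collect_all closed_Collect_imp closed_Collect_le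
        open_Collect_const continuous_on_component continuous_on_id continuous_on_const)
qed

lemma unit_box_subset_kuhn_simplices:
  assumes "x \<in> cbox 0 (1 :: real^'n::finite)"
  obtains s where "bij_betw s {..<CARD('n)} (UNIV :: 'n set)" "x \<in> kuhn_simplex s"
proof -
  obtain L where L: "set L = (UNIV :: 'n set)" "distinct L"
    using finite_distinct_list[of "UNIV :: 'n set"] by auto
  define M where "M = sort_key (\<lambda>j. - x $ j) L"
  have M: "set M = UNIV" "distinct M" "sorted (map (\<lambda>j. - x $ j) M)"
    using L by (auto simp: M_def)
  have len: "length M = CARD('n)"
    using distinct_card[OF M(2)] M(1) by simp
  have "bij_betw ((!) M) {..<CARD('n)} UNIV"
    by (rule bij_betw_nth) (use M len in auto)
  moreover have "x $ (M ! Suc k) \<le> x $ (M ! k)" if "Suc k < CARD('n)" for k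
    using sorted_nth_mono[OF M(3), of k "Suc k"] that len by simp
  moreover have "0 \<le> x $ j \<and> x $ j \<le> 1" for j
    using assms by (simp add: mem_box_cart)
  ultimately show ?thesis
    using that[of "(!) M"] by (simp add: kuhn_simplex_def)
qed

lemma kuhn_simplex_restrict:
  "kuhn_simplex (restrict s {..<CARD('n)}) = kuhn_simplex (s :: nat \<Rightarrow> 'n::finite)"
  by (auto simp: kuhn_simplex_def)

lemma kuhn_at_cases:
  fixes i :: "int^'n::finite"
  assumes "T \<in> kuhn_at i"
  obtains z s where "bij_betw s {..<CARD('n)} (UNIV :: 'n set)"
    "T = (\<lambda>x. lat z + x) ` kuhn_simplex s" "z \<in> touching_cubes {i}"
proof -
  obtain z s where s: "bij_betw s {..<CARD('n)} (UNIV :: 'n set)"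
    and T: "T = (\<lambda>x. lat z + x) ` kuhn_simplex s" and "lat i \<in> T"
    using assms by (auto simp: kuhn_at_def kuhn_family_def)
  then have "lat (i - z) \<in> kuhn_simplex s"
    by (auto simp: lat_diff)
  then have "i - z \<in> unit_corners"
    using kuhn_simplex_subset_unit_box[OF s] lat_in_unit_box_iff by blast
  then have "z \<in> touching_cubes {i}"
    by (force simp: touching_cubes_def)
  with s T that show ?thesis by blast
qed

lemma kuhn_at_subset_unit_cube:
  fixes i :: "int^'n::finite"
  assumes "T \<in> kuhn_at i"
  obtains z where "z \<in> touching_cubes {i}" "T \<subseteq> unit_cube z"
proof -
  obtain z s where "bij_betw s {..<CARD('n)} (UNIV :: 'n set)"
    "T = (\<lambda>x. lat z + x) ` kuhn_simplex s" "z \<in> touching_cubes {i}"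
    using kuhn_at_cases[OF assms] by blast
  with kuhn_simplex_subset_unit_box that show ?thesis
    by (metis image_mono unit_cube_eq_translation)
qed

lemma compact_kuhn_family: "T \<in> kuhn_family \<Longrightarrow> compact T"
  by (auto simp: kuhn_family_def intro: compact_translation compact_kuhn_simplex)

lemma finite_kuhn_at: "finite (kuhn_at (i :: int^'n::finite))"
proof (rule finite_subset)
  let ?simplex = "\<lambda>(z, s). (\<lambda>x. lat z + x) ` kuhn_simplex s"
  show "kuhn_at i \<subseteq> ?simplex ` (touching_cubes {i} \<times> ({..<CARD('n)} \<rightarrow>\<^sub>E UNIV))"
  proof
    fix T assume "T \<in> kuhn_at i"
    then obtain z s where "T = (\<lambda>x. lat z + x) ` kuhn_simplex s" "z \<in> touching_cubes {i}"
      by (rule kuhn_at_cases)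
    then show "T \<in> ?simplex ` (touching_cubes {i} \<times> ({..<CARD('n)} \<rightarrow>\<^sub>E UNIV))"
      by (intro image_eqI[of _ _ "(z, restrict s {..<CARD('n)})"]) (auto simp: kuhn_simplex_restrict)
  qed
  show "finite (?simplex ` (touching_cubes {i} \<times> ({..<CARD('n)} \<rightarrow>\<^sub>E (UNIV :: 'n set))))"
    by (simp add: finite_touching_cubes finite_PiE)
qed

section \<open>Measure of zeta\<close>

lemma compact_zeta: "finite X \<Longrightarrow> compact (zeta X)"
  unfolding zeta_def
  by (intro compact_UN finite_kuhn_at) (auto simp: kuhn_at_def compact_kuhn_family)

lemma unit_cube_subset_zeta:
  fixes X :: "(int^'n::finite) set"
  assumes "i \<in> X"
  shows "unit_cube i \<subseteq> zeta X"
proof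
  fix y assume "y \<in> unit_cube i"
  then obtain x where y: "y = lat i + x" and "x \<in> cbox 0 1"
    by (auto simp: unit_cube_eq_translation)
  from \<open>x \<in> cbox 0 1\<close> obtain s
    where s: "bij_betw s {..<CARD('n)} (UNIV :: 'n set)" and x: "x \<in> kuhn_simplex s"
    by (rule unit_box_subset_kuhn_simplices)
  let ?T = "(\<lambda>x. lat i + x) ` kuhn_simplex s"
  have "?T \<in> kuhn_family"
    unfolding kuhn_family_def using s by blast
  moreover have "lat i \<in> ?T"
    using zero_in_kuhn_simplex by (metis add.right_neutral image_eqI)
  moreover have "y \<in> ?T"
    using x y by blast
  ultimately show "y \<in> zeta X"
    using assms unfolding zeta_def kuhn_at_def by blast
qed

lemma zeta_subset_touching_cubes: "zeta X \<subseteq> \<Union> (unit_cube ` touching_cubes X)"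
proof
  fix y assume "y \<in> zeta X"
  then obtain i T where "i \<in> X" "T \<in> kuhn_at i" "y \<in> T"
    by (auto simp: zeta_def)
  then obtain z where "z \<in> touching_cubes {i}" "y \<in> unit_cube z"
    by (meson kuhn_at_subset_unit_cube subsetD)
  with \<open>i \<in> X\<close> show "y \<in> \<Union> (unit_cube ` touching_cubes X)"
    by (auto simp: touching_cubes_def)
qed

lemma lmeasurable_zeta: "finite X \<Longrightarrow> zeta X \<in> lmeasurable"
  by (simp add: compact_zeta lmeasurable_compact)

lemma lmeasurable_Union_unit_cubes: "finite X \<Longrightarrow> \<Union> (unit_cube ` X) \<in> lmeasurable"
  by (intro lmeasurable_compact compact_UN compact_unit_cube)

lemma measure_Union_unit_cubes:
  assumes "finite X"
  shows "measure lebesgue (\<Union> (unit_cube ` X)) = card X"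
proof -
  have "measure lebesgue (\<Union> (unit_cube ` X)) = (\<Sum>i\<in>X. measure lebesgue (unit_cube i))"
    using assms
    by (intro measure_negligible_finite_Union_image)
       (auto simp: pairwise_def negligible_unit_cube_Int lmeasurable_unit_cube)
  then show ?thesis
    by (simp add: measure_unit_cube)
qed

lemma card_le_measure_zeta:
  assumes "finite X"
  shows "real (card X) \<le> measure lebesgue (zeta X)"
proof -
  have "measure lebesgue (\<Union> (unit_cube ` X)) \<le> measure lebesgue (zeta X)"
    using unit_cube_subset_zeta
    by (intro measure_mono_fmeasurable fmeasurableD lmeasurable_Union_unit_cubes
        lmeasurable_zeta assms) blast
  then show ?thesis
    using measure_Union_unit_cubes[OF assms] by simp
qed

lemma measure_zeta_le_card_touching_cubes:
  assumes "finite X"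
  shows "measure lebesgue (zeta X) \<le> real (card (touching_cubes X))"
proof -
  have "measure lebesgue (zeta X) \<le> measure lebesgue (\<Union> (unit_cube ` touching_cubes X))"
    by (intro measure_mono_fmeasurable zeta_subset_touching_cubes fmeasurableD lmeasurable_zeta
        lmeasurable_Union_unit_cubes finite_touching_cubes assms)
  also have "\<dots> \<le> (\<Sum>z\<in>touching_cubes X. measure lebesgue (unit_cube z))"
    by (intro measure_UNION_le finite_touching_cubes assms fmeasurableD lmeasurable_unit_cube)
  finally show ?thesis
    by (simp add: measure_unit_cube)
qed

lemma measure_zeta_le_perim:
  fixes X :: "(int^'n::finite) set"
  assumes "finite X"
  shows "measure lebesgue (zeta X) \<le> card X + 2 ^ CARD('n) * perim X"
  using measure_zeta_le_card_touching_cubes[OF assms] card_touching_cubes_le_perim[OF assms]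
  by linarith

lemma measure_zeta_le_card:
  fixes X :: "(int^'n::finite) set"
  assumes "finite X"
  shows "measure lebesgue (zeta X) \<le> 2 ^ CARD('n) * card X"
proof -
  have "measure lebesgue (zeta X) \<le> real (card (touching_cubes X))"
    using measure_zeta_le_card_touching_cubes[OF assms] .
  also have "\<dots> \<le> real (2 ^ CARD('n) * card X)"
    using card_touching_cubes_le[OF assms] by (simp only: of_nat_le_iff)
  finally show ?thesis
    by simp
qed

lemma perimN_rescaled:
  "real (card X) powr ((real CARD('n) - 1) / real CARD('n)) * perimN X = perim (X :: (int^'n::finite) set)"
proof (cases "card X = 0")
  case True
  then have "perim X = 0"
    by (cases "finite X") (simp_all add: perim_def)
  with True show ?thesis
    by (simp add: perimN_def)
next
  case False
  let ?a = "(real CARD('n) - 1) / real CARD('n)"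
  have "real (card X) powr ?a * real (card X) powr (- ?a) = 1"
    using False by (simp add: powr_add[symmetric])
  then show ?thesis
    by (simp add: perimN_def minus_divide_left mult.assoc[symmetric])
qed

theorem lemma4p4:
  assumes "CARD('n::finite) \<ge> 2"
  shows "(\<exists>C>0. \<forall>(N::nat) (X::(int^'n) set). finite X \<and> card X = N \<longrightarrow>
            real N \<le> measure lebesgue (zeta X) \<and>
            measure lebesgue (zeta X) \<le>
              real N + C * real N powr ((real CARD('n) - 1) / real CARD('n)) * perimN X)
       \<and> (\<exists>C>0. \<forall>(N::nat) (X::(int^'n) set). finite X \<and> card X = N \<longrightarrow>
            measure lebesgue (zeta X) \<le> C * real N)"
proof -
  let ?C = "2 ^ CARD('n) :: real"
  have "measure lebesgue (zeta X) \<le>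
      card X + ?C * real (card X) powr ((real CARD('n) - 1) / real CARD('n)) * perimN X"
    if "finite X" for X :: "(int^'n) set"
    using measure_zeta_le_perim[OF that] by (simp add: mult.assoc perimN_rescaled)
  then show ?thesis
    using card_le_measure_zeta measure_zeta_le_card by (intro conjI exI[of _ ?C]) auto
qed

end
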